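(* Let $\mathrm{K}$ be a semi-symmetric curvature tensor on a finite-dimensional pseudo-Euclidean vector space $(V,\langle\cdot,\cdot\rangle)$ and let $\chi$ be the minimal polynomial (over $\mathbb{R}$) of its Ricci operator $\mathrm{Ric}$. Then: (1) $\chi=\prod_i P_i$ where the $P_i$ are pairwise coprime and each $P_i$ is either irreducible or equal to $X^2$. Write $P_1,\dots,P_r$ for the factors not in $\{X,X^2\}$ (each irreducible and coprime to $X$). (2) $V$ splits as an orthogonal direct sum $V=E_0\oplus E_1\oplus\cdots\oplus E_r$, where $E_0=\ker(\mathrm{Ric}^2)$ and $E_i=\ker(P_i(\mathrm{Ric}))$ for $1\le i\le r$. (3) Each $E_i$ ($0\le i\le r$) is invariant under every $\mathrm{K}(u,v)$, $u,v\in V$. (4) For $i\neq j$, $\mathrm{K}(u,v)=0$ whenever $u\in E_i$, $v\in E_j$. (5) $\dim E_i\ge 2$ for every $1\le i\le r$. (6) $\mathfrak{h}(\mathrm{K})=\mathfrak{h}_0(\mathrm{K})+\mathfrak{h}_1(\mathrm{K})+\cdots+\mathfrak{h}_r(\mathrm{K})$, where $\mathfrak{h}_i(\mathrm{K})$ is the span of $\{\mathrm{K}(x,y): x,y\in E_i\}$, and each $\mathfrak{h}_i(\mathrm{K})$ is a Lie subalgebra.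
   Context: A curvature tensor on a pseudo-Euclidean vector space $(V,\langle\cdot,\cdot\rangle)$ is a bilinear map $\mathrm{K}:V\times V\to \mathfrak{so}(V,\langle\cdot,\cdot\rangle)$ with $\mathrm{K}(u,v)=-\mathrm{K}(v,u)$, $\mathrm{K}(u,v)w+\mathrm{K}(v,w)u+\mathrm{K}(w,u)v=0$, and $\langle \mathrm{K}(a,b)u,v\rangle=\langle \mathrm{K}(u,v)a,b\rangle$. It is semi-symmetric if $[\mathrm{K}(u,v),\mathrm{K}(a,b)]=\mathrm{K}(\mathrm{K}(u,v)a,b)+\mathrm{K}(a,\mathrm{K}(u,v)b)$ for all $u,v,a,b\in V$. $\mathfrak{h}(\mathrm{K})$ denotes the linear span of $\{\mathrm{K}(u,v):u,v\in V\}$ in $\mathfrak{so}(V)$. The Ricci operator $\mathrm{Ric}$ is the symmetric endomorphism with $\langle\mathrm{Ric}(u),v\rangle=\operatorname{trace}(a\mapsto \mathrm{K}(u,a)v)$. *)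

theory Defs
  imports "HOL-Analysis.Analysis" "HOL-Computational_Algebra.Polynomial"
begin

text \<open>Endomorphisms of V = real^'n are represented as functions (for the Ricci operator)
  and as matrices (for the values K(u,v), so that their span lives in a real vector space).\<close>

definition trace_op :: "(real^'n \<Rightarrow> real^'n) \<Rightarrow> real" where
  "trace_op f = (\<Sum>i\<in>UNIV. f (axis i 1) $ i)"

definition poly_op :: "real poly \<Rightarrow> (real^'n \<Rightarrow> real^'n) \<Rightarrow> real^'n \<Rightarrow> real^'n" where
  "poly_op p f x = (\<Sum>i\<le>degree p. coeff p i *\<^sub>R (f ^^ i) x)"

definition is_min_poly :: "(real^'n \<Rightarrow> real^'n) \<Rightarrow> real poly \<Rightarrow> bool" where
  "is_min_poly f p \<longleftrightarrow> lead_coeff p = 1 \<and> (\<forall>x. poly_op p f x = 0)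
     \<and> (\<forall>q. (\<forall>x. poly_op q f x = 0) \<longrightarrow> p dvd q)"

definition min_poly :: "(real^'n \<Rightarrow> real^'n) \<Rightarrow> real poly" where
  "min_poly f = (THE p. is_min_poly f p)"

definition pseudo_euclidean :: "(real^'n \<Rightarrow> real^'n \<Rightarrow> real) \<Rightarrow> bool" where
  "pseudo_euclidean B \<longleftrightarrow> bilinear B \<and> (\<forall>x y. B x y = B y x)
     \<and> (\<forall>x. (\<forall>y. B x y = 0) \<longrightarrow> x = 0)"

definition curvature_tensor ::
  "(real^'n \<Rightarrow> real^'n \<Rightarrow> real) \<Rightarrow> (real^'n \<Rightarrow> real^'n \<Rightarrow> real^'n^'n) \<Rightarrow> bool" where
  "curvature_tensor B K \<longleftrightarrow> bilinear K
     \<and> (\<forall>u v x y. B (K u v *v x) y = - B x (K u v *v y))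
     \<and> (\<forall>u v. K u v = - K v u)
     \<and> (\<forall>u v w. K u v *v w + K v w *v u + K w u *v v = 0)
     \<and> (\<forall>a b u v. B (K a b *v u) v = B (K u v *v a) b)"

definition semi_symmetric :: "(real^'n \<Rightarrow> real^'n \<Rightarrow> real^'n^'n) \<Rightarrow> bool" where
  "semi_symmetric K \<longleftrightarrow> (\<forall>u v a b.
     K u v ** K a b - K a b ** K u v = K (K u v *v a) b + K a (K u v *v b))"

text \<open>Ric is the (unique, by nondegeneracy) linear map with B (Ric u) v = trace (a \<mapsto> K(u,a) v).\<close>
definition is_ricci ::
  "(real^'n \<Rightarrow> real^'n \<Rightarrow> real) \<Rightarrow> (real^'n \<Rightarrow> real^'n \<Rightarrow> real^'n^'n) \<Rightarrow> (real^'n \<Rightarrow> real^'n) \<Rightarrow> bool" where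
  "is_ricci B K Ric \<longleftrightarrow> linear Ric \<and> (\<forall>u v. B (Ric u) v = trace_op (\<lambda>a. K u a *v v))"

definition hol_alg :: "(real^'n \<Rightarrow> real^'n \<Rightarrow> real^'n^'n) \<Rightarrow> (real^'n) set \<Rightarrow> (real^'n^'n) set" where
  "hol_alg K E = span {K x y | x y. x \<in> E \<and> y \<in> E}"

definition lie_subalgebra :: "(real^'n^'n) set \<Rightarrow> bool" where
  "lie_subalgebra h \<longleftrightarrow> subspace h \<and> (\<forall>A\<in>h. \<forall>C\<in>h. A ** C - C ** A \<in> h)"

end

theory Submission
  imports Defs "HOL-Computational_Algebra.Polynomial_Factorial" "HOL-Computational_Algebra.Field_as_Ring"
begin

text \<open>The Ricci operator is \<open>B\<close>-symmetric, and semi-symmetry makes it commute with every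
  \<open>K(u,v)\<close>. Hence every polynomial \<open>q(Ric)\<close> commutes with \<open>K(u,v)\<close>, is symmetric, and satisfies
  \<open>K(q(Ric) x, y) = q(Ric) \<circ> K(x, y)\<close>. If \<open>q(Ric)\<close> is nilpotent, \<open>B(Ric q(Ric) x, y)\<close> is the trace of
  the nilpotent map \<open>a \<mapsto> q(Ric) K(x,a) y\<close>, so \<open>Ric q(Ric) = 0\<close>; with \<open>q\<close> the radical of the minimal
  polynomial \<open>\<chi>\<close> this gives \<open>\<chi> | X \<cdot> rad \<chi>\<close>. The primary decomposition for the pairwise coprime
  factors \<open>X\<^sup>2, P\<^sub>1, \<dots>, P\<^sub>r\<close> is orthogonal because \<open>Ric\<close> is symmetric, and \<open>K\<close>-invariant because
  \<open>Ric\<close> commutes with \<open>K\<close>. Pair symmetry then kills \<open>K(E\<^sub>i, E\<^sub>j)\<close> for \<open>i \<noteq> j\<close>, and a line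
  \<open>E\<^sub>i = span {e}\<close> would give \<open>K(e, \<cdot>) = 0\<close>, hence \<open>Ric e = 0\<close>, impossible for \<open>P\<^sub>i\<close> coprime to \<open>X\<close>.\<close>

section \<open>Polynomials in a linear operator\<close>

lemma funpow_commute:
  assumes "\<And>x. g (f x) = f (g x)"
  shows "g ((f ^^ n) x) = (f ^^ n) (g x)"
  by (induction n) (simp_all add: assms)

lemma funpow_comp_commute:
  assumes "\<And>x. g (f x) = f (g x)"
  shows "((f \<circ> g) ^^ n) x = (f ^^ n) ((g ^^ n) x)"
  by (induction n arbitrary: x) (simp_all add: funpow_commute[of g f, OF assms])

lemma linear_funpow:
  fixes f :: "'a::real_vector \<Rightarrow> 'a"
  assumes "linear f"
  shows "linear (f ^^ n)"
proof (induction n)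
  case 0
  then show ?case by (simp add: linear_ident)
next
  case (Suc n)
  then show ?case using linear_compose[OF Suc.IH assms] by (simp add: o_def)
qed

lemma poly_op_eq_sum_lessThan:
  assumes "degree p < N"
  shows "poly_op p f x = (\<Sum>i<N. coeff p i *\<^sub>R (f ^^ i) x)"
  unfolding poly_op_def using assms
  by (intro sum.mono_neutral_left) (auto simp: coeff_eq_0)

lemma poly_op_0 [simp]: "poly_op 0 f x = 0"
  by (simp add: poly_op_def)

lemma poly_op_const [simp]: "poly_op [:c:] f x = c *\<^sub>R x"
  by (simp add: poly_op_def)

lemma poly_op_1 [simp]: "poly_op 1 f x = x"
  by (simp add: poly_op_def)

lemma poly_op_monom: "poly_op (monom c n) f x = c *\<^sub>R (f ^^ n) x"
  using degree_monom_le[of c n]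
  by (simp add: poly_op_eq_sum_lessThan[of _ "Suc n"] coeff_monom)

lemma poly_op_add: "poly_op (p + q) f x = poly_op p f x + poly_op q f x"
proof -
  define N where "N = Suc (max (degree p) (degree q))"
  have "degree (p + q) < N" "degree p < N" "degree q < N"
    using degree_add_le_max[of p q] by (auto simp: N_def)
  then show ?thesis
    by (simp add: poly_op_eq_sum_lessThan[of _ N] scaleR_add_left sum.distrib)
qed

lemma poly_op_smult: "poly_op (smult c p) f x = c *\<^sub>R poly_op p f x"
proof -
  have "degree (smult c p) < Suc (degree p)" "degree p < Suc (degree p)"
    using degree_smult_le[of c p] by auto
  then show ?thesis
    by (simp only: poly_op_eq_sum_lessThan coeff_smult scaleR_sum_right scaleR_scaleR)
qed

lemma poly_op_sum: "finite I \<Longrightarrow> poly_op (\<Sum>i\<in>I. g i) f x = (\<Sum>i\<in>I. poly_op (g i) f x)"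
  by (induction I rule: finite_induct) (simp_all add: poly_op_add)

lemma poly_op_pCons:
  assumes "linear f"
  shows "poly_op (pCons a p) f x = a *\<^sub>R x + f (poly_op p f x)"
proof -
  define N where "N = Suc (degree p)"
  have "poly_op (pCons a p) f x = (\<Sum>i<Suc N. coeff (pCons a p) i *\<^sub>R (f ^^ i) x)"
    using degree_pCons_le[of a p] by (intro poly_op_eq_sum_lessThan) (simp add: N_def)
  also have "\<dots> = a *\<^sub>R x + f (\<Sum>i<N. coeff p i *\<^sub>R (f ^^ i) x)"
    by (subst sum.lessThan_Suc_shift) (simp add: assms linear_sum linear_cmul)
  also have "(\<Sum>i<N. coeff p i *\<^sub>R (f ^^ i) x) = poly_op p f x"
    by (rule poly_op_eq_sum_lessThan[symmetric]) (simp add: N_def)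
  finally show ?thesis .
qed

lemma poly_op_X:
  assumes "linear f"
  shows "poly_op [:0, 1:] f x = f x"
  by (simp add: poly_op_pCons[OF assms] linear_0[OF assms])

lemma poly_op_X_squared:
  assumes "linear f"
  shows "poly_op [:0, 0, 1:] f x = f (f x)"
  by (simp add: poly_op_pCons[OF assms] linear_0[OF assms])

lemma poly_op_mult:
  assumes "linear f"
  shows "poly_op (p * q) f x = poly_op p f (poly_op q f x)"
  by (induction p arbitrary: x rule: pCons_induct)
    (simp_all add: mult_pCons_left poly_op_add poly_op_smult poly_op_pCons[OF assms])

lemma poly_op_power:
  assumes "linear f"
  shows "poly_op (p ^ n) f x = (poly_op p f ^^ n) x"
  by (induction n arbitrary: x) (simp_all add: poly_op_mult[OF assms])

lemma linear_poly_op: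
  assumes "linear f"
  shows "linear (poly_op p f)"
  unfolding poly_op_def
  using linear_funpow[OF assms]
  by (intro linear_compose_sum ballI module_hom_scale) auto

lemma poly_op_0_right [simp]: "linear f \<Longrightarrow> poly_op p f 0 = 0"
  using linear_0[OF linear_poly_op] by blast

lemma poly_op_commute:
  assumes "linear f" "linear g" "\<And>x. g (f x) = f (g x)"
  shows "g (poly_op p f x) = poly_op p f (g x)"
  by (induction p arbitrary: x rule: pCons_induct)
    (simp_all add: poly_op_pCons[OF assms(1)] assms linear_0 linear_add linear_cmul)

lemma poly_op_eq_0_dvd:
  assumes "linear f" "poly_op p f x = 0" "p dvd q"
  shows "poly_op q f x = 0"
proof -
  obtain r where "q = r * p" using assms(3) by (metis dvd_def mult.commute)
  then show ?thesis using assms by (simp add: poly_op_mult)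
qed

section \<open>Prime-power factorisation\<close>

definition prime_power_factors :: "'a::{factorial_semiring_multiplicative, semiring_gcd} \<Rightarrow> 'a set"
  where "prime_power_factors x = (\<lambda>p. p ^ multiplicity p x) ` prime_factors x"

lemma finite_prime_power_factors [simp]: "finite (prime_power_factors x)"
  by (simp add: prime_power_factors_def)

lemma prime_power_factors_eq_imp_eq:
  assumes "p \<in> prime_factors x" "q \<in> prime_factors x"
    and "p ^ multiplicity p x = q ^ multiplicity q x"
  shows "p = q"
proof -
  have "prime p" "prime q" "multiplicity p x > 0" using assms(1,2)
    by (auto simp: in_prime_factors_iff prime_multiplicity_gt_zero_iff)
  then have "p dvd q ^ multiplicity q x" using assms(3) by (metis dvd_power)
  then have "p dvd q" using \<open>prime p\<close> by (metis prime_dvd_power)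
  with \<open>prime p\<close> \<open>prime q\<close> show ?thesis by (rule primes_dvd_imp_eq)
qed

lemma prod_prime_power_factors:
  assumes "x \<noteq> 0"
  shows "\<Prod>(prime_power_factors x) = normalize x"
proof -
  have "inj_on (\<lambda>p. p ^ multiplicity p x) (prime_factors x)"
    by (auto intro: inj_onI prime_power_factors_eq_imp_eq)
  then show ?thesis
    using prod_prime_factors[OF assms] by (simp add: prime_power_factors_def prod.reindex)
qed

lemma prime_power_factors_coprime:
  assumes "P \<in> prime_power_factors x" "Q \<in> prime_power_factors x" "P \<noteq> Q"
  shows "coprime P Q"
proof -
  obtain p q where pq: "p \<in> prime_factors x" "q \<in> prime_factors x"
    and "P = p ^ multiplicity p x" "Q = q ^ multiplicity q x"
    using assms(1,2) unfolding prime_power_factors_def by blast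
  moreover have "coprime p q"
    using pq assms(3) calculation by (intro primes_coprime) (auto simp: in_prime_factors_iff)
  ultimately show ?thesis by (simp add: coprime_power_left_iff coprime_power_right_iff)
qed

lemma normalize_monic_poly:
  fixes p :: "real poly"
  assumes "lead_coeff p = 1"
  shows "normalize p = p"
  using assms by (simp add: normalize_poly_def flip: one_pCons)

lemma monic_if_prime:
  fixes p :: "real poly"
  assumes "prime p"
  shows "lead_coeff p = 1"
proof -
  have "unit_factor p * normalize p = p" by (rule unit_factor_mult_normalize)
  then have "smult (lead_coeff p) p = p"
    using normalize_prime[OF assms] by (simp add: unit_factor_poly_def)
  then have "lead_coeff p * lead_coeff p = lead_coeff p" by (metis lead_coeff_smult)
  moreover have "p \<noteq> 0" using assms by auto
  ultimately show ?thesis by simp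
qed

lemma prime_X: "prime [:0, 1 :: real:]"
  using prime_elem_linear_field_poly[of 1 0] by (simp add: prime_def normalize_monic_poly)

lemma X_squared: "[:0, 1 :: real:] ^ 2 = [:0, 0, 1:]"
  by (simp add: power2_eq_square)

lemma not_prime_X_squared: "\<not> prime [:0, 0, 1 :: real:]"
proof -
  have "\<not> prime_elem ([:0, 1 :: real:] ^ 2)" by (simp only: prime_elem_power_iff) simp
  then show ?thesis by (simp add: power2_eq_square prime_def)
qed

lemma prime_factor_irreducible_coprime_X:
  fixes q :: "real poly"
  assumes "P \<in> prime_factors q - {[:0, 1:]}"
  shows "irreducible P \<and> coprime P [:0, 1:]"
proof -
  have "prime P" "P \<noteq> [:0, 1:]" using assms by (auto simp: in_prime_factors_iff)
  then show ?thesis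
    using primes_coprime[OF _ prime_X] prime_elem_imp_irreducible[OF prime_imp_prime_elem] by blast
qed

lemma multiplicity_le_if_dvd_X_mult_radical:
  fixes q :: "real poly"
  assumes "q \<noteq> 0" and dvd: "q dvd [:0, 1:] * \<Prod>(prime_factors q)" and p: "prime p"
  shows "multiplicity p q \<le> (if p = [:0, 1:] then 2 else 1)"
proof -
  let ?X = "[:0, 1 :: real:]" and ?r = "\<Prod>(prime_factors q)"
  have "?r \<noteq> 0" by (auto simp: in_prime_factors_iff)
  have mult_prime: "multiplicity p (\<Prod>P) = (if p \<in> P then 1 else 0)"
    if "finite P" "\<And>x. x \<in> P \<Longrightarrow> prime x" for P
    using multiplicity_prod_prime_powers[where f = "\<lambda>_. 1", OF that p] by simp
  have "multiplicity p q \<le> multiplicity p (?X * ?r)"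
    using dvd \<open>?r \<noteq> 0\<close> by (intro dvd_imp_multiplicity_le) auto
  also have "\<dots> = multiplicity p (\<Prod>{?X}) + multiplicity p ?r"
    using prime_elem_multiplicity_mult_distrib[OF prime_imp_prime_elem[OF p], of ?X ?r] \<open>?r \<noteq> 0\<close>
    by simp
  also have "\<dots> \<le> (if p = ?X then 2 else 1)"
    using mult_prime[of "{?X}"] mult_prime[of "prime_factors q"] prime_X
    by (auto simp: in_prime_factors_iff)
  finally show ?thesis .
qed

lemma prime_power_factor_cases:
  fixes q :: "real poly"
  assumes "q \<noteq> 0" "q dvd [:0, 1:] * \<Prod>(prime_factors q)" "p \<in> prime_factors q"
  shows "p ^ multiplicity p q = p \<or> p = [:0, 1:] \<and> p ^ multiplicity p q = [:0, 0, 1:]"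
proof -
  have "prime p" using assms(3) by (simp add: in_prime_factors_iff)
  then have "0 < multiplicity p q"
    using assms(1,3) by (simp add: prime_multiplicity_gt_zero_iff in_prime_factors_iff)
  moreover have "multiplicity p q \<le> (if p = [:0, 1:] then 2 else 1)"
    using multiplicity_le_if_dvd_X_mult_radical[OF assms(1,2) \<open>prime p\<close>] .
  ultimately have "multiplicity p q = 1 \<or> p = [:0, 1:] \<and> multiplicity p q = 2"
    by (auto split: if_splits)
  then show ?thesis by (auto simp: power2_eq_square)
qed

lemma prime_power_factors_minus_X_powers:
  fixes q :: "real poly"
  assumes "q \<noteq> 0" "q dvd [:0, 1:] * \<Prod>(prime_factors q)"
  shows "prime_power_factors q - {[:0, 1:], [:0, 0, 1:]} = prime_factors q - {[:0, 1:]}"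
proof -
  have "p \<noteq> [:0, 0, 1:]" if "p \<in> prime_factors q" for p
    using that not_prime_X_squared by (auto simp: in_prime_factors_iff)
  then show ?thesis
    using prime_power_factor_cases[OF assms] unfolding prime_power_factors_def by force
qed

lemma prime_power_factors_monic:
  fixes q :: "real poly"
  assumes "q \<noteq> 0" "q dvd [:0, 1:] * \<Prod>(prime_factors q)" "P \<in> prime_power_factors q"
  shows "lead_coeff P = 1 \<and> (irreducible P \<or> P = [:0, 0, 1:])"
proof -
  obtain p where p: "p \<in> prime_factors q" "P = p ^ multiplicity p q"
    using assms(3) unfolding prime_power_factors_def by blast
  then have "prime p" by (simp add: in_prime_factors_iff)
  then have "lead_coeff p = 1 \<and> irreducible p"
    by (simp add: monic_if_prime prime_elem_imp_irreducible)
  moreover have "P = p \<or> P = [:0, 0, 1:]"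
    using prime_power_factor_cases[OF assms(1,2) p(1)] p(2) by auto
  ultimately show ?thesis by auto
qed

section \<open>The minimal polynomial\<close>

lemma nontrivial_linear_relation:
  fixes v :: "nat \<Rightarrow> 'a::euclidean_space"
  shows "\<exists>c. (\<exists>i\<le>DIM('a). c i \<noteq> 0) \<and> (\<Sum>i\<le>DIM('a). c i *\<^sub>R v i) = 0"
proof (cases "inj_on v {..DIM('a)}")
  case False
  then obtain i j where ij: "i \<le> DIM('a)" "j \<le> DIM('a)" "i \<noteq> j" "v i = v j"
    unfolding inj_on_def by auto
  define c where "c k = (if k = i then 1 else if k = j then -1 else 0 :: real)" for k
  have "(\<Sum>k\<le>DIM('a). c k *\<^sub>R v k) = (\<Sum>k\<in>{i, j}. c k *\<^sub>R v k)"
    using ij by (intro sum.mono_neutral_cong_right) (auto simp: c_def)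
  also have "\<dots> = 0" using ij by (simp add: c_def)
  finally show ?thesis using ij by (intro exI[of _ c]) (auto simp: c_def)
next
  case True
  then have "\<not> independent (v ` {..DIM('a)})"
    using independent_bound[of "v ` {..DIM('a)}"] by (auto simp: card_image)
  then obtain T u where T: "finite T" "T \<subseteq> v ` {..DIM('a)}" "(\<Sum>w\<in>T. u w *\<^sub>R w) = 0"
    and "\<exists>w\<in>T. u w \<noteq> 0"
    unfolding dependent_explicit by blast
  define I where "I = {i. i \<le> DIM('a) \<and> v i \<in> T}"
  define c where "c i = (if i \<in> I then u (v i) else 0)" for i
  have "T = v ` I" using T(2) by (auto simp: I_def)
  have "(\<Sum>i\<le>DIM('a). c i *\<^sub>R v i) = (\<Sum>i\<in>I. u (v i) *\<^sub>R v i)"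
    by (rule sum.mono_neutral_cong_right) (auto simp: I_def c_def)
  also have "\<dots> = (\<Sum>w\<in>T. u w *\<^sub>R w)"
  proof -
    have "inj_on v I" using True by (rule inj_on_subset) (auto simp: I_def)
    then show ?thesis unfolding \<open>T = v ` I\<close> by (simp add: sum.reindex)
  qed
  finally have "(\<Sum>i\<le>DIM('a). c i *\<^sub>R v i) = 0" using T(3) by simp
  moreover obtain w where "w \<in> T" "u w \<noteq> 0" using \<open>\<exists>w\<in>T. u w \<noteq> 0\<close> ..
  then obtain i where "i \<in> I" "v i = w" using \<open>T = v ` I\<close> by blast
  then have "\<exists>i\<le>DIM('a). c i \<noteq> 0" using \<open>u w \<noteq> 0\<close> by (auto simp: c_def I_def)
  ultimately show ?thesis by blast
qed

lemma matrix_vector_mult_sum_left: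
  "finite I \<Longrightarrow> (\<Sum>i\<in>I. A i) *v x = (\<Sum>i\<in>I. A i *v x)"
  by (induction I rule: finite_induct) (simp_all add: matrix_vector_mult_add_rdistrib)

lemma poly_op_annihilator_exists:
  fixes f :: "real^'n \<Rightarrow> real^'n"
  assumes lf: "linear f"
  shows "\<exists>p. p \<noteq> 0 \<and> (\<forall>x. poly_op p f x = 0)"
proof -
  let ?D = "DIM(real^'n^'n)"
  obtain c where c: "\<exists>i\<le>?D. c i \<noteq> 0" "(\<Sum>i\<le>?D. c i *\<^sub>R matrix (f ^^ i)) = 0"
    using nontrivial_linear_relation[of "\<lambda>i. matrix (f ^^ i)"] by blast
  define p where "p = (\<Sum>i\<le>?D. monom (c i) i)"
  have "coeff p i = c i" if "i \<le> ?D" for i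
    using that by (simp add: p_def coeff_sum)
  then have "p \<noteq> 0" using c(1) by force
  moreover have "poly_op p f x = 0" for x
  proof -
    have "matrix (f ^^ i) *v x = (f ^^ i) x" for i
      using linear_funpow[OF lf] by (simp add: matrix_works)
    then have "poly_op p f x = (\<Sum>i\<le>?D. c i *\<^sub>R matrix (f ^^ i)) *v x"
      by (simp add: p_def poly_op_sum poly_op_monom matrix_vector_mult_sum_left
          flip: scaleR_matrix_vector_assoc)
    then show ?thesis using c(2) by simp
  qed
  ultimately show ?thesis by blast
qed

text \<open>The monic annihilator of least degree divides every annihilator by Euclidean division.\<close>
lemma is_min_poly_min_poly:
  fixes f :: "real^'n \<Rightarrow> real^'n"
  assumes lf: "linear f"
  shows "is_min_poly f (min_poly f)"
proof -
  define Ann where "Ann = {p. p \<noteq> 0 \<and> (\<forall>x. poly_op p f x = 0)}"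
  obtain p1 where "p1 \<in> Ann" using poly_op_annihilator_exists[OF lf] unfolding Ann_def by auto
  then obtain p0 where p0: "p0 \<in> Ann" "\<And>q. q \<in> Ann \<Longrightarrow> degree p0 \<le> degree q"
    using ex_has_least_nat[of "\<lambda>p. p \<in> Ann" p1 degree] by blast
  define m where "m = smult (inverse (lead_coeff p0)) p0"
  have "p0 \<noteq> 0" and p0_ann: "\<And>x. poly_op p0 f x = 0" using p0(1) unfolding Ann_def by auto
  then have m_monic: "lead_coeff m = 1" and "degree m = degree p0"
    by (simp_all add: m_def)
  have m_ann: "poly_op m f x = 0" for x by (simp add: m_def poly_op_smult p0_ann)
  have m_dvd: "m dvd q" if q: "\<forall>x. poly_op q f x = 0" for q
  proof -
    have "q div m * m + q mod m = q" by simp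
    then have "poly_op (q mod m) f x = 0" for x
      using poly_op_add[of "q div m * m" "q mod m" f x] q m_ann
      by (simp add: poly_op_mult[OF lf] lf)
    then have "q mod m = 0"
      using p0(2)[of "q mod m"] degree_mod_less[of m q] m_monic \<open>degree m = degree p0\<close>
      unfolding Ann_def by fastforce
    then show ?thesis by (simp add: dvd_eq_mod_eq_0)
  qed
  have m_min: "is_min_poly f m" unfolding is_min_poly_def using m_monic m_ann m_dvd by auto
  have "p = m" if "is_min_poly f p" for p
  proof -
    have "p dvd m" "m dvd p" "lead_coeff p = 1"
      using that m_ann m_dvd unfolding is_min_poly_def by auto
    then show ?thesis using associated_eqI normalize_monic_poly m_monic by metis
  qed
  then have "min_poly f = m" unfolding min_poly_def using m_min by (rule the_equality[rotated])
  then show ?thesis using m_min by simp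
qed

lemma
  fixes f :: "real^'n \<Rightarrow> real^'n"
  assumes "linear f"
  shows min_poly_monic: "lead_coeff (min_poly f) = 1"
    and min_poly_annihilates: "poly_op (min_poly f) f x = 0"
    and min_poly_dvd: "(\<And>x. poly_op q f x = 0) \<Longrightarrow> min_poly f dvd q"
  using is_min_poly_min_poly[OF assms] unfolding is_min_poly_def by blast+

lemma min_poly_eq_prod_prime_power_factors:
  fixes f :: "real^'n \<Rightarrow> real^'n"
  assumes "linear f"
  shows "min_poly f = \<Prod>(prime_power_factors (min_poly f))"
proof -
  have "lead_coeff (min_poly f) = 1" by (rule min_poly_monic[OF assms])
  then show ?thesis
    using prod_prime_power_factors[of "min_poly f"] normalize_monic_poly by force
qed

lemma min_poly_prime_factor_kernel_nonzero:
  fixes f :: "real^'n \<Rightarrow> real^'n"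
  assumes lf: "linear f" and p: "p \<in> prime_factors (min_poly f)"
  shows "\<exists>x. x \<noteq> 0 \<and> poly_op p f x = 0"
proof (rule ccontr)
  assume "\<not> ?thesis"
  then have inj: "poly_op p f x = 0 \<Longrightarrow> x = 0" for x by blast
  obtain r where r: "min_poly f = p * r" using p by (auto simp: in_prime_factors_iff elim: dvdE)
  have "poly_op p f (poly_op r f x) = 0" for x
    using min_poly_annihilates[OF lf] r by (simp add: poly_op_mult[OF lf, symmetric])
  then have "poly_op r f x = 0" for x by (rule inj)
  then have "min_poly f dvd r" by (rule min_poly_dvd[OF lf])
  moreover have "r \<noteq> 0" "prime p"
    using r min_poly_monic[OF lf] p by (auto simp: in_prime_factors_iff)
  moreover have "degree p \<noteq> 0"
    using \<open>prime p\<close> is_unit_iff_degree[of p] not_prime_unit[of p] by auto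
  ultimately show False using r dvd_imp_degree_le[of "min_poly f" r] by (simp add: degree_mult_eq)
qed

section \<open>Kernels of coprime polynomials\<close>

lemma poly_coprime_bezout:
  fixes p q :: "real poly"
  assumes "coprime p q"
  obtains u v where "u * p + v * q = 1"
  using bezout_coefficients_fst_snd[of p q] coprime_imp_gcd_eq_1[OF assms] by metis

lemma poly_op_kernels_coprime:
  fixes f :: "real^'n \<Rightarrow> real^'n"
  assumes lf: "linear f" and "coprime p q" and "poly_op p f x = 0" and "poly_op q f x = 0"
  shows "x = 0"
proof -
  obtain u v where "u * p + v * q = 1" using poly_coprime_bezout[OF assms(2)] .
  then have "x = poly_op (u * p + v * q) f x" by simp
  also have "\<dots> = 0" using assms(3,4) by (simp add: poly_op_add poly_op_mult[OF lf] lf)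
  finally show ?thesis .
qed

lemma poly_op_kernels_sum_exists:
  fixes f :: "real^'n \<Rightarrow> real^'n" and g :: "'i \<Rightarrow> real poly"
  assumes lf: "linear f" and "finite I"
    and "\<forall>i\<in>I. \<forall>j\<in>I. i \<noteq> j \<longrightarrow> coprime (g i) (g j)"
    and "poly_op (\<Prod>i\<in>I. g i) f x = 0"
  shows "\<exists>c. (\<forall>i\<in>I. poly_op (g i) f (c i) = 0) \<and> x = (\<Sum>i\<in>I. c i)"
  using assms(2-4)
proof (induction I arbitrary: x rule: finite_induct)
  case empty
  then show ?case by simp
next
  case (insert j I)
  define h where "h = (\<Prod>i\<in>I. g i)"
  have "coprime (g j) h"
    unfolding h_def using insert.prems(1) insert.hyps(2) by (intro prod_coprime_right) auto
  then obtain u v where uv: "u * g j + v * h = 1" by (rule poly_coprime_bezout)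
  have ann: "poly_op (g j * h) f x = 0" using insert by (simp add: h_def)
  have "poly_op h f (poly_op (u * g j) f x) = poly_op u f (poly_op (g j * h) f x)"
    by (simp add: poly_op_mult[OF lf, symmetric] ac_simps)
  then have "poly_op h f (poly_op (u * g j) f x) = 0"
    using ann by (simp add: lf)
  then obtain c where c: "\<forall>i\<in>I. poly_op (g i) f (c i) = 0" "poly_op (u * g j) f x = (\<Sum>i\<in>I. c i)"
    using insert.IH insert.prems(1) unfolding h_def by (metis insert_iff)
  have "poly_op (g j) f (poly_op (v * h) f x) = poly_op v f (poly_op (g j * h) f x)"
    by (simp add: poly_op_mult[OF lf, symmetric] ac_simps)
  then have "poly_op (g j) f (poly_op (v * h) f x) = 0"
    using ann by (simp add: lf)
  moreover have "x = poly_op (v * h) f x + (\<Sum>i\<in>I. c i)"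
    using uv c(2) poly_op_add[of "u * g j" "v * h" f x] by (simp add: add.commute)
  moreover have "(\<Sum>i\<in>I. (c(j := poly_op (v * h) f x)) i) = (\<Sum>i\<in>I. c i)"
    using insert.hyps(2) by (intro sum.cong) auto
  ultimately show ?case
    using c(1) insert.hyps by (intro exI[of _ "c(j := poly_op (v * h) f x)"]) auto
qed

lemma poly_op_kernels_sum_unique:
  fixes f :: "real^'n \<Rightarrow> real^'n" and g :: "'i \<Rightarrow> real poly"
  assumes lf: "linear f" and fin: "finite I"
    and cop: "\<forall>i\<in>I. \<forall>j\<in>I. i \<noteq> j \<longrightarrow> coprime (g i) (g j)"
    and ker: "\<forall>i\<in>I. poly_op (g i) f (c i) = 0"
    and sum: "(\<Sum>i\<in>I. c i) = 0" and i: "i \<in> I"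
  shows "c i = 0"
proof -
  define h where "h = (\<Prod>l\<in>I - {i}. g l)"
  have "coprime (g i) h"
    unfolding h_def using cop i by (intro prod_coprime_right) auto
  have others: "poly_op h f (c l) = 0" if l: "l \<in> I - {i}" for l
  proof -
    have "g l dvd h" unfolding h_def using fin l by (intro dvd_prodI) auto
    then show ?thesis using poly_op_eq_0_dvd[OF lf] ker l by blast
  qed
  have "0 = poly_op h f (\<Sum>l\<in>I. c l)" using sum lf by simp
  also have "\<dots> = (\<Sum>l\<in>I. poly_op h f (c l))"
    by (rule linear_sum[OF linear_poly_op[OF lf]])
  also have "\<dots> = poly_op h f (c i) + (\<Sum>l\<in>I - {i}. poly_op h f (c l))"
    using fin i by (rule sum.remove)
  finally have "poly_op h f (c i) = 0" using others by simp
  then show "c i = 0"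
    using poly_op_kernels_coprime[OF lf \<open>coprime (g i) h\<close>] ker i by blast
qed

section \<open>Trace\<close>

lemma trace_op_eq_trace_matrix: "trace_op f = trace (matrix f)"
  unfolding trace_op_def trace_def matrix_def by simp

lemma trace_op_comp_commute:
  fixes f g :: "real^'n \<Rightarrow> real^'n"
  assumes "linear f" "linear g"
  shows "trace_op (f \<circ> g) = trace_op (g \<circ> f)"
  unfolding trace_op_eq_trace_matrix matrix_compose[OF assms(2,1)] matrix_compose[OF assms]
  by (rule trace_mul_sym)

lemma trace_op_diff: "trace_op (\<lambda>x. f x - g x) = trace_op f - trace_op g"
  by (simp add: trace_op_def sum_subtractf)

lemma trace_transpose: "trace (transpose A) = trace (A :: 'a::semiring_1^'n^'n)"
  by (simp add: trace_def transpose_def)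

lemma linear_retraction_onto_subspace:
  fixes W :: "'a::real_vector set"
  assumes "subspace W"
  obtains P where "linear P" "\<And>w. w \<in> W \<Longrightarrow> P w = w" "range P \<subseteq> W"
proof -
  obtain P where "range P \<subseteq> W" "linear P" "\<forall>w\<in>W. P (id w) = w"
    using real_vector.linear_exists_left_inverse_on[of id W] assms linear_id by auto
  then show ?thesis using that by simp
qed

lemma dim_image_range_less_if_nilpotent:
  fixes T :: "'a::euclidean_space \<Rightarrow> 'a"
  assumes lin: "linear T" and nil: "\<And>x. (T ^^ m) x = 0" and "range T \<noteq> {0}"
  shows "dim (T ` range T) < dim (range T)"
proof (rule ccontr)
  assume "\<not> dim (T ` range T) < dim (range T)"
  moreover have "subspace (range T)" by (rule linear_subspace_image[OF lin subspace_UNIV])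
  ultimately have "T ` range T = range T"
    by (intro subspace_dim_equal linear_subspace_image[OF lin]) auto
  then have "range (T ^^ Suc k) = range T" for k
  proof (induction k)
    case (Suc k)
    then show ?case by (metis funpow.simps(2) image_comp)
  qed simp
  moreover have "range (T ^^ Suc m) = {0}" using nil lin by (auto simp: linear_0)
  ultimately show False using \<open>range T \<noteq> {0}\<close> by blast
qed

text \<open>For a retraction \<open>P\<close> onto \<open>W = range T\<close>, \<open>trace T = trace (T \<circ> P)\<close>, and \<open>T \<circ> P\<close> is again
  nilpotent, with the smaller range \<open>T ` W\<close>.\<close>
lemma trace_op_nilpotent:
  fixes T :: "real^'n \<Rightarrow> real^'n"
  assumes "linear T" "\<And>x. (T ^^ m) x = 0"
  shows "trace_op T = 0"
  using assms
proof (induction "dim (range T)" arbitrary: T m rule: less_induct)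
  case less
  note lin = \<open>linear T\<close>
  define W where "W = range T"
  show ?case
  proof (cases "W = {0}")
    case True
    have "T x \<in> W" for x by (simp add: W_def)
    then show ?thesis using True by (simp add: trace_op_def)
  next
    case False
    have "subspace W" unfolding W_def by (rule linear_subspace_image[OF lin subspace_UNIV])
    then obtain P where P: "linear P" "\<And>w. w \<in> W \<Longrightarrow> P w = w" "range P \<subseteq> W"
      using linear_retraction_onto_subspace by blast
    have "P \<circ> T = T" using P(2) by (auto simp: W_def)
    then have tr: "trace_op T = trace_op (T \<circ> P)"
      using trace_op_comp_commute[OF P(1) lin] by simp
    have pow: "((T \<circ> P) ^^ Suc k) x = (T ^^ Suc k) (P x)" for k x
    proof (induction k)
      case (Suc k)
      have "(T ^^ Suc k) (P x) \<in> W" by (simp add: W_def)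
      then show ?case using Suc P(2) by simp
    qed simp
    have "range P = W" using P(2,3) by (metis rangeI subsetI subset_antisym)
    then have "range (T \<circ> P) = T ` range T" by (metis image_comp W_def)
    then have "dim (range (T \<circ> P)) < dim (range T)"
      using dim_image_range_less_if_nilpotent[OF lin less.prems(2)] False by (simp add: W_def)
    moreover have "((T \<circ> P) ^^ Suc m) x = 0" for x
      using pow less.prems(2) lin by (simp add: linear_0)
    ultimately have "trace_op (T \<circ> P) = 0"
      using less.hyps linear_compose[OF P(1) lin] by blast
    then show ?thesis using tr by simp
  qed
qed

lemma bilinear_eq_inner_matrix:
  fixes B :: "real^'n \<Rightarrow> real^'n \<Rightarrow> real"
  assumes "bilinear B"
  shows "B x y = x \<bullet> ((\<chi> i j. B (axis i 1) (axis j 1)) *v y)"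
proof -
  let ?G = "\<chi> i j. B (axis i 1) (axis j 1)"
  have "bilinear (\<lambda>x y. x \<bullet> (?G *v y))"
    unfolding bilinear_def linear_iff
    by (simp add: inner_add_left inner_add_right matrix_vector_right_distrib
        linear_cmul[OF matrix_vector_mul_linear])
  moreover have "u \<bullet> (?G *v v) = B u v" if "u \<in> Basis" "v \<in> Basis" for u v
    using that by (auto simp: Basis_vec_def inner_axis' matrix_vector_mult_basis column_def)
  ultimately have "(\<lambda>x y. x \<bullet> (?G *v y)) = B"
    by (rule bilinear_eq_stdbasis[OF _ assms])
  then show ?thesis by metis
qed

text \<open>With \<open>G\<close> the invertible Gram matrix of \<open>B\<close> and \<open>M\<close> the matrix of \<open>A\<close>, skewness reads
  \<open>M\<^sup>T G = - G M\<close>, so \<open>M\<close> is similar to \<open>- M\<^sup>T\<close>.\<close>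
lemma trace_op_skew_adjoint:
  fixes B :: "real^'n \<Rightarrow> real^'n \<Rightarrow> real" and A :: "real^'n \<Rightarrow> real^'n"
  assumes B: "pseudo_euclidean B" and lin: "linear A" and skew: "\<And>x y. B (A x) y = - B x (A y)"
  shows "trace_op A = 0"
proof -
  define G :: "real^'n^'n" where "G = (\<chi> i j. B (axis i 1) (axis j 1))"
  define M where "M = matrix A"
  have B_G: "B x y = x \<bullet> (G *v y)" for x y
    using B bilinear_eq_inner_matrix unfolding pseudo_euclidean_def G_def by blast
  have A_M: "A x = M *v x" for x
    using lin by (simp add: M_def matrix_works linear_matrix_vector_mul_eq)
  have "transpose M ** G + G ** M = 0"
  proof -
    have "x \<bullet> ((transpose M ** G) *v y) = (M *v x) \<bullet> (G *v y)" for x y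
    proof -
      have "x \<bullet> ((transpose M ** G) *v y) = (x v* transpose M) \<bullet> (G *v y)"
        by (simp only: matrix_vector_mul_assoc[symmetric] dot_lmul_matrix)
      then show ?thesis by (simp only: vector_transpose_matrix)
    qed
    then have "x \<bullet> ((transpose M ** G + G ** M) *v y) = 0" for x y
      using skew[of x y]
      by (simp add: matrix_vector_mult_add_rdistrib inner_add_right B_G A_M matrix_vector_mul_assoc)
    then show ?thesis by (metis matrix_eq matrix_vector_mult_0 vector_eq_ldot inner_zero_right)
  qed
  have "G *v y = 0 \<Longrightarrow> y = 0" for y
    using B unfolding pseudo_euclidean_def by (metis B_G inner_zero_right)
  then obtain H where "H ** G = mat 1"
    using matrix_left_invertible_ker by blast
  then have "G ** H = mat 1" by (simp add: matrix_left_right_inverse)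
  have "trace M + trace M = trace (H ** (G ** M)) + trace ((H ** transpose M) ** G)"
    using \<open>H ** G = mat 1\<close> \<open>G ** H = mat 1\<close> trace_mul_sym[of "H ** transpose M" G]
    by (simp add: matrix_mul_assoc trace_transpose)
  also have "\<dots> = trace (H ** (transpose M ** G + G ** M))"
    by (simp add: matrix_add_ldistrib trace_add matrix_mul_assoc)
  also have "\<dots> = 0"
    using \<open>transpose M ** G + G ** M = 0\<close> by (simp add: trace_def)
  finally have "trace M + trace M = 0" .
  then show ?thesis by (simp add: trace_op_eq_trace_matrix M_def)
qed

lemma matrix_add_rdistrib: "(A + B) ** C = A ** C + B ** (C :: 'a::semiring_1^'n^'m)"
  by (simp add: matrix_matrix_mult_def vec_eq_iff distrib_right sum.distrib)

lemma bilinear_commutator: "bilinear (\<lambda>A C. A ** C - C ** (A :: real^'n^'n))"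
  unfolding bilinear_def linear_iff
  by (simp add: matrix_add_ldistrib matrix_add_rdistrib matrix_scalar_ac
      scalar_matrix_assoc[symmetric] scaleR_diff_right)

lemma bilinear_span_closed:
  assumes h: "bilinear h" and gen: "\<And>a b. a \<in> G \<Longrightarrow> b \<in> G \<Longrightarrow> h a b \<in> span G"
    and "a \<in> span G" "b \<in> span G"
  shows "h a b \<in> span G"
proof -
  have lin_l: "linear (\<lambda>a. h a b)" and lin_r: "linear (h a)" for a b
    using h by (simp_all add: bilinear_def)
  have "span G \<subseteq> h a -` span G" if "a \<in> G" for a
    using gen that by (intro span_minimal linear_subspace_vimage[OF lin_r] subspace_span) auto
  then have "span G \<subseteq> (\<lambda>a. h a b) -` span G"
    using \<open>b \<in> span G\<close> by (intro span_minimal linear_subspace_vimage[OF lin_l] subspace_span) auto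
  then show ?thesis using \<open>a \<in> span G\<close> by auto
qed

lemma subspace_family_sums:
  assumes "\<And>i. i \<in> I \<Longrightarrow> subspace (S i)"
  shows "subspace {(\<Sum>i\<in>I. c i) | c. \<forall>i\<in>I. c i \<in> S i}"
  unfolding subspace_def
proof (intro conjI ballI allI)
  show "0 \<in> {(\<Sum>i\<in>I. c i) | c. \<forall>i\<in>I. c i \<in> S i}"
    using assms subspace_0 by (intro CollectI exI[of _ "\<lambda>_. 0"]) auto
next
  fix x y assume "x \<in> {(\<Sum>i\<in>I. c i) | c. \<forall>i\<in>I. c i \<in> S i}" "y \<in> {(\<Sum>i\<in>I. c i) | c. \<forall>i\<in>I. c i \<in> S i}"
  then obtain c d where "x = (\<Sum>i\<in>I. c i)" "y = (\<Sum>i\<in>I. d i)" "\<forall>i\<in>I. c i \<in> S i \<and> d i \<in> S i"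
    by blast
  then show "x + y \<in> {(\<Sum>i\<in>I. c i) | c. \<forall>i\<in>I. c i \<in> S i}"
    using assms by (intro CollectI exI[of _ "\<lambda>i. c i + d i"]) (auto simp: sum.distrib intro!: subspace_add)
next
  fix a x assume "x \<in> {(\<Sum>i\<in>I. c i) | c. \<forall>i\<in>I. c i \<in> S i}"
  then obtain c where "x = (\<Sum>i\<in>I. c i)" "\<forall>i\<in>I. c i \<in> S i" by blast
  then show "a *\<^sub>R x \<in> {(\<Sum>i\<in>I. c i) | c. \<forall>i\<in>I. c i \<in> S i}"
    using assms by (intro CollectI exI[of _ "\<lambda>i. a *\<^sub>R c i"]) (auto simp: scaleR_sum_right intro!: subspace_scale)
qed

lemma lie_subalgebra_hol_alg:
  assumes "semi_symmetric K" and "\<forall>u v x. x \<in> E \<longrightarrow> K u v *v x \<in> E"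
  shows "lie_subalgebra (hol_alg K E)"
proof -
  let ?G = "{K x y |x y. x \<in> E \<and> y \<in> E}"
  have "K x y ** K a b - K a b ** K x y \<in> span ?G" if "x \<in> E" "y \<in> E" "a \<in> E" "b \<in> E" for x y a b
  proof -
    have "K x y ** K a b - K a b ** K x y = K (K x y *v a) b + K a (K x y *v b)"
      using assms(1) unfolding semi_symmetric_def by blast
    moreover have "K (K x y *v a) b \<in> ?G" "K a (K x y *v b) \<in> ?G"
      using assms(2) that by blast+
    ultimately show ?thesis by (simp add: span_add span_base)
  qed
  then have "A ** C - C ** A \<in> span ?G" if "A \<in> span ?G" "C \<in> span ?G" for A C
    using bilinear_span_closed[OF bilinear_commutator, of ?G] that by blast
  then show ?thesis unfolding lie_subalgebra_def hol_alg_def by (simp add: subspace_span)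
qed

locale curvature_space =
  fixes B :: "real^'n \<Rightarrow> real^'n \<Rightarrow> real"
    and K :: "real^'n \<Rightarrow> real^'n \<Rightarrow> real^'n^'n"
  assumes pseudo_euclidean: "pseudo_euclidean B"
    and curvature_tensor: "curvature_tensor B K"
begin

lemma B_bilinear: "bilinear B"
  and B_sym: "B x y = B y x"
  and B_nondegenerate: "(\<And>y. B x y = 0) \<Longrightarrow> x = 0"
  using pseudo_euclidean unfolding pseudo_euclidean_def by blast+

lemma K_bilinear: "bilinear K"
  and K_skew_adjoint: "B (K u v *v x) y = - B x (K u v *v y)"
  and K_antisym: "K u v = - K v u"
  and bianchi: "K u v *v w + K v w *v u + K w u *v v = 0"
  and K_pair_symmetric: "B (K a b *v u) v = B (K u v *v a) b"
  using curvature_tensor unfolding curvature_tensor_def by blast+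

lemma B_eqI: "(\<And>y. B x y = B x' y) \<Longrightarrow> x = x'"
  using B_nondegenerate[of "x - x'"] by (simp add: bilinear_lsub[OF B_bilinear])

lemma K_apply_antisym: "K u v *v x = - (K v u *v x)"
  by (subst K_antisym) (simp add: matrix_vector_mult_def vec_eq_iff sum_negf)

lemma K_self [simp]: "K u u = 0"
  using K_antisym[of u u] by (simp add: vec_eq_iff)

lemma linear_K_apply_right: "linear (\<lambda>a. K u a *v w)"
  unfolding linear_iff
  by (simp add: bilinear_radd[OF K_bilinear] bilinear_rmul[OF K_bilinear]
      matrix_vector_mult_add_rdistrib scaleR_matrix_vector_assoc)

text \<open>Pair symmetry turns \<open>B (K u v w) z\<close> into \<open>B (K w z u) v\<close>, which vanishes because
  \<open>K w z u\<close> stays in the invariant subspace of \<open>u\<close>.\<close>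
lemma K_eq_0_if_orthogonal_invariant:
  assumes "\<forall>u v x. x \<in> E \<longrightarrow> K u v *v x \<in> E" and "\<forall>x\<in>E. \<forall>y\<in>F. B x y = 0"
    and "u \<in> E" "v \<in> F"
  shows "K u v = 0"
proof -
  have "B (K u v *v w) z = 0" for w z
    using assms K_pair_symmetric[of u v w z] by simp
  then have "K u v *v w = 0" for w using B_nondegenerate by blast
  then show ?thesis by (simp add: matrix_eq)
qed

definition orthogonal_invariant_decomposition :: "'i set \<Rightarrow> ('i \<Rightarrow> (real^'n) set) \<Rightarrow> bool"
  where "orthogonal_invariant_decomposition I E \<longleftrightarrow> finite I
     \<and> (\<forall>v. \<exists>c. (\<forall>i\<in>I. c i \<in> E i) \<and> v = (\<Sum>i\<in>I. c i))
     \<and> (\<forall>c. (\<forall>i\<in>I. c i \<in> E i) \<and> (\<Sum>i\<in>I. c i) = 0 \<longrightarrow> (\<forall>i\<in>I. c i = 0))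
     \<and> (\<forall>i\<in>I. \<forall>j\<in>I. i \<noteq> j \<longrightarrow> (\<forall>x\<in>E i. \<forall>y\<in>E j. B x y = 0))
     \<and> (\<forall>i\<in>I. \<forall>u v x. x \<in> E i \<longrightarrow> K u v *v x \<in> E i)"

lemma orthogonal_invariant_decompositionD:
  assumes "orthogonal_invariant_decomposition I E"
  shows decomposition_finite: "finite I"
    and decomposition_split: "\<forall>v. \<exists>c. (\<forall>i\<in>I. c i \<in> E i) \<and> v = (\<Sum>i\<in>I. c i)"
    and decomposition_unique: "\<forall>c. (\<forall>i\<in>I. c i \<in> E i) \<and> (\<Sum>i\<in>I. c i) = 0 \<longrightarrow> (\<forall>i\<in>I. c i = 0)"
    and decomposition_orthogonal: "\<forall>i\<in>I. \<forall>j\<in>I. i \<noteq> j \<longrightarrow> (\<forall>x\<in>E i. \<forall>y\<in>E j. B x y = 0)"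
    and decomposition_invariant: "\<forall>i\<in>I. \<forall>u v x. x \<in> E i \<longrightarrow> K u v *v x \<in> E i"
  using assms unfolding orthogonal_invariant_decomposition_def by simp_all

lemma decomposition_K_cross_eq_0:
  assumes "orthogonal_invariant_decomposition I E"
  shows "\<forall>i\<in>I. \<forall>j\<in>I. i \<noteq> j \<longrightarrow> (\<forall>u\<in>E i. \<forall>v\<in>E j. K u v = 0)"
proof (intro ballI impI)
  fix i j u v assume "i \<in> I" "j \<in> I" "i \<noteq> j" "u \<in> E i" "v \<in> E j"
  then show "K u v = 0"
    using decomposition_invariant[OF assms] decomposition_orthogonal[OF assms]
    by (intro K_eq_0_if_orthogonal_invariant[of "E i" "E j"]) blast+
qed

lemma decomposition_K_sum:
  assumes D: "orthogonal_invariant_decomposition I E"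
    and "\<forall>i\<in>I. a i \<in> E i" "\<forall>i\<in>I. b i \<in> E i"
  shows "K (\<Sum>i\<in>I. a i) (\<Sum>i\<in>I. b i) = (\<Sum>i\<in>I. K (a i) (b i))"
proof -
  have "K (\<Sum>i\<in>I. a i) (\<Sum>i\<in>I. b i) = (\<Sum>i\<in>I. \<Sum>j\<in>I. K (a i) (b j))"
    unfolding bilinear_sum[OF K_bilinear] sum.cartesian_product[symmetric] ..
  also have "\<dots> = (\<Sum>i\<in>I. K (a i) (b i))"
  proof (rule sum.cong[OF refl])
    fix i assume "i \<in> I"
    then have "K (a i) (b j) = 0" if "j \<in> I - {i}" for j
      using decomposition_K_cross_eq_0[OF D] assms(2,3) that \<open>i \<in> I\<close> by fastforce
    then show "(\<Sum>j\<in>I. K (a i) (b j)) = K (a i) (b i)"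
      by (simp add: sum.remove[OF decomposition_finite[OF D] \<open>i \<in> I\<close>])
  qed
  finally show ?thesis .
qed

lemma hol_alg_decomposition:
  assumes D: "orthogonal_invariant_decomposition I E"
  shows "hol_alg K UNIV = {(\<Sum>i\<in>I. c i) | c. \<forall>i\<in>I. c i \<in> hol_alg K (E i)}"
    (is "_ = ?R")
proof
  have "K x y \<in> ?R" for x y
  proof -
    obtain a b where a: "\<forall>i\<in>I. a i \<in> E i" "x = (\<Sum>i\<in>I. a i)"
      and b: "\<forall>i\<in>I. b i \<in> E i" "y = (\<Sum>i\<in>I. b i)"
      using decomposition_split[OF D] by meson
    then have "K x y = (\<Sum>i\<in>I. K (a i) (b i))" using decomposition_K_sum[OF D] by simp
    moreover have "\<forall>i\<in>I. K (a i) (b i) \<in> hol_alg K (E i)"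
      using a(1) b(1) unfolding hol_alg_def by (blast intro: span_base)
    ultimately show ?thesis by blast
  qed
  moreover have "subspace ?R" unfolding hol_alg_def by (intro subspace_family_sums subspace_span)
  ultimately show "hol_alg K UNIV \<subseteq> ?R"
    unfolding hol_alg_def by (intro span_minimal) blast+
  show "?R \<subseteq> hol_alg K UNIV"
  proof
    fix z assume "z \<in> ?R"
    then obtain c where z: "z = (\<Sum>i\<in>I. c i)" and "\<forall>i\<in>I. c i \<in> hol_alg K (E i)" by blast
    moreover have "hol_alg K (E i) \<subseteq> hol_alg K UNIV" for i
      unfolding hol_alg_def by (intro span_mono) auto
    ultimately have "c i \<in> span {K x y |x y. x \<in> UNIV \<and> y \<in> UNIV}" if "i \<in> I" for i
      using that unfolding hol_alg_def by blast
    then show "z \<in> hol_alg K UNIV" unfolding z hol_alg_def by (rule span_sum)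
  qed
qed

end

locale ricci_space = curvature_space B K for B :: "real^'n \<Rightarrow> real^'n \<Rightarrow> real" and K +
  fixes Ric :: "real^'n \<Rightarrow> real^'n"
  assumes ricci: "is_ricci B K Ric"
begin

lemma Ric_linear: "linear Ric"
  and B_Ric: "B (Ric u) v = trace_op (\<lambda>a. K u a *v v)"
  using ricci unfolding is_ricci_def by blast+

text \<open>By Bianchi, \<open>a \<mapsto> K u a v\<close> equals \<open>a \<mapsto> K v a u\<close> minus the \<open>B\<close>-skew map \<open>K v u\<close>,
  which has trace zero.\<close>
lemma Ric_symmetric: "B (Ric u) v = B u (Ric v)"
proof -
  have "(\<lambda>a. K u a *v v) = (\<lambda>a. K v a *v u - K v u *v a)"
  proof
    fix a
    have "K u a *v v = (K u a *v v + K a v *v u + K v u *v a) - K a v *v u - K v u *v a" by simp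
    also have "\<dots> = - (K a v *v u) - K v u *v a" by (simp only: bianchi diff_0)
    also have "\<dots> = K v a *v u - K v u *v a" by (simp only: K_apply_antisym[of a v u] minus_minus)
    finally show "K u a *v v = K v a *v u - K v u *v a" .
  qed
  then have "B (Ric u) v = trace_op (\<lambda>a. K v a *v u) - trace_op (\<lambda>a. K v u *v a)"
    by (simp only: B_Ric trace_op_diff)
  also have "trace_op (\<lambda>a. K v u *v a) = 0"
    by (rule trace_op_skew_adjoint[OF pseudo_euclidean matrix_vector_mul_linear]) (rule K_skew_adjoint)
  also have "trace_op (\<lambda>a. K v a *v u) - 0 = B u (Ric v)"
    unfolding diff_0_right B_sym[of u] B_Ric ..
  finally show ?thesis .
qed

lemma poly_op_Ric_symmetric: "B (poly_op p Ric x) y = B x (poly_op p Ric y)"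
proof (induction p arbitrary: x y rule: pCons_induct)
  case 0
  then show ?case by (simp add: bilinear_lzero[OF B_bilinear] bilinear_rzero[OF B_bilinear])
next
  case (pCons a p)
  have "B (poly_op (pCons a p) Ric x) y = a * B x y + B (Ric (poly_op p Ric x)) y"
    by (simp add: poly_op_pCons[OF Ric_linear] bilinear_ladd[OF B_bilinear] bilinear_lmul[OF B_bilinear])
  also have "B (Ric (poly_op p Ric x)) y = B x (poly_op p Ric (Ric y))"
    using Ric_symmetric pCons.IH by simp
  also have "poly_op p Ric (Ric y) = Ric (poly_op p Ric y)"
    by (rule poly_op_commute[OF Ric_linear Ric_linear, symmetric]) (rule refl)
  also have "a * B x y + B x (Ric (poly_op p Ric y)) = B x (poly_op (pCons a p) Ric y)"
    by (simp add: poly_op_pCons[OF Ric_linear] bilinear_radd[OF B_bilinear] bilinear_rmul[OF B_bilinear])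
  finally show ?case .
qed

lemma kernels_coprime_orthogonal:
  assumes "coprime p q" "poly_op p Ric x = 0" "poly_op q Ric y = 0"
  shows "B x y = 0"
proof -
  obtain u v where uv: "u * p + v * q = 1" using poly_coprime_bezout[OF assms(1)] .
  have "x = poly_op (u * p + v * q) Ric x" using uv by simp
  also have "\<dots> = poly_op (v * q) Ric x"
    using assms(2) by (simp add: poly_op_add poly_op_mult[OF Ric_linear] Ric_linear)
  finally have "B x y = B (poly_op (v * q) Ric x) y" by (rule arg_cong)
  also have "\<dots> = B x (poly_op (v * q) Ric y)" by (rule poly_op_Ric_symmetric)
  also have "\<dots> = 0"
    using assms(3) by (simp add: poly_op_mult[OF Ric_linear] Ric_linear bilinear_rzero[OF B_bilinear])
  finally show ?thesis .
qed

lemma Ric_eq_0_if_K_eq_0: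
  assumes "\<And>a. K e a = 0"
  shows "Ric e = 0"
  by (rule B_nondegenerate) (simp add: B_Ric assms trace_op_def)

lemma decomposition_K_eq_0_if_line:
  assumes D: "orthogonal_invariant_decomposition I E" and i: "i \<in> I"
    and line: "E i \<subseteq> span {e}" and e: "e \<in> E i"
  shows "K e a = 0"
proof -
  obtain c where c: "\<forall>l\<in>I. c l \<in> E l" "a = (\<Sum>l\<in>I. c l)"
    using decomposition_split[OF D] by blast
  have "K e (c l) = 0" if "l \<in> I" for l
  proof (cases "l = i")
    case True
    then have "c l \<in> span {e}" using c(1) line i by auto
    then obtain t where "c l = t *\<^sub>R e" by (auto simp: span_singleton)
    then show ?thesis by (simp add: bilinear_rmul[OF K_bilinear])
  next
    case False
    then show ?thesis using decomposition_K_cross_eq_0[OF D] i that e c(1) by fastforce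
  qed
  moreover have "K e a = (\<Sum>l\<in>I. K e (c l))"
    unfolding c(2) using K_bilinear by (simp add: bilinear_def linear_sum)
  ultimately show ?thesis by simp
qed

text \<open>A line \<open>E i = span {e}\<close> would force \<open>K e = 0\<close>, hence \<open>Ric e = 0\<close>.\<close>
lemma decomposition_kernel_dim_ge_2:
  assumes D: "orthogonal_invariant_decomposition I E" and i: "i \<in> I"
    and E_i: "E i = {x. poly_op P Ric x = 0}" and cop: "coprime P [:0, 1:]"
    and e: "e \<in> E i" "e \<noteq> 0"
  shows "2 \<le> dim (E i)"
proof (rule ccontr)
  assume "\<not> 2 \<le> dim (E i)"
  have sub: "subspace (E i)"
    unfolding E_i by (rule linear_subspace_kernel[OF linear_poly_op[OF Ric_linear]])
  have "span {e} \<subseteq> E i" using span_minimal[of "{e}" "E i"] e sub by blast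
  moreover have "dim (E i) \<le> dim (span {e})"
    using e(2) \<open>\<not> 2 \<le> dim (E i)\<close> by (simp add: dim_span dim_singleton)
  ultimately have "span {e} = E i" by (rule subspace_dim_equal[OF subspace_span sub])
  then have "Ric e = 0"
    using decomposition_K_eq_0_if_line[OF D i _ e(1)] by (intro Ric_eq_0_if_K_eq_0) simp
  then have "poly_op [:0, 1:] Ric e = 0" by (simp add: poly_op_X[OF Ric_linear])
  then have "e = 0"
    using e(1) E_i by (intro poly_op_kernels_coprime[OF Ric_linear cop, of e]) auto
  then show False using e(2) by contradiction
qed

end

locale semi_symmetric_space = ricci_space +
  assumes semi_symmetric: "semi_symmetric K"
begin

lemma K_commutator: "K u v ** K a b - K a b ** K u v = K (K u v *v a) b + K a (K u v *v b)"
  using semi_symmetric unfolding semi_symmetric_def by blast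

text \<open>Semi-symmetry writes \<open>K (K u v w) a\<close> as \<open>[K u v, K w a] - K w (K u v a)\<close>; the commutator is
  traceless in \<open>a\<close>, and the last term contributes \<open>K u v (Ric w)\<close> by skew-adjointness.\<close>
lemma Ric_commute_K: "Ric (K u v *v w) = K u v *v Ric w"
proof (rule B_eqI)
  fix y
  define A where "A = K u v"
  define M where "M a = K w a *v y" for a
  have split: "K (A *v w) a *v y = A *v M a - K w a *v (A *v y) - M (A *v a)" for a
  proof -
    have "K (A *v w) a = A ** K w a - K w a ** A - K w (A *v a)"
      using K_commutator[of u v w a] unfolding A_def by (simp add: algebra_simps)
    then show ?thesis
      unfolding M_def by (simp add: matrix_vector_mult_diff_rdistrib matrix_vector_mul_assoc)
  qed
  have "B (Ric (A *v w)) y = trace_op (\<lambda>a. K (A *v w) a *v y)" by (rule B_Ric)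
  also have "\<dots> = trace_op (\<lambda>a. A *v M a) - trace_op (\<lambda>a. K w a *v (A *v y))
      - trace_op (\<lambda>a. M (A *v a))"
    unfolding split by (simp add: trace_op_diff)
  also have "trace_op (\<lambda>a. A *v M a) = trace_op (\<lambda>a. M (A *v a))"
    using trace_op_comp_commute[OF matrix_vector_mul_linear linear_K_apply_right, of A w y]
    by (simp add: M_def o_def)
  also have "trace_op (\<lambda>a. K w a *v (A *v y)) = B (Ric w) (A *v y)" by (rule B_Ric[symmetric])
  also have "\<dots> = - B (A *v Ric w) y" using K_skew_adjoint[of u v "Ric w" y] by (simp add: A_def)
  finally show "B (Ric (K u v *v w)) y = B (K u v *v Ric w) y" by (simp add: A_def)
qed

lemma poly_op_Ric_commute_K: "poly_op p Ric (K u v *v w) = K u v *v poly_op p Ric w"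
  by (rule poly_op_commute[OF Ric_linear matrix_vector_mul_linear, symmetric])
    (rule Ric_commute_K[symmetric])

lemma K_poly_op_Ric_swap: "K (poly_op p Ric x) y = K x (poly_op p Ric y)"
proof -
  have "K (poly_op p Ric x) y *v a = K x (poly_op p Ric y) *v a" for a
  proof (rule B_eqI)
    fix b
    have "B (K (poly_op p Ric x) y *v a) b = B (K a b *v poly_op p Ric x) y"
      by (rule K_pair_symmetric[symmetric])
    also have "\<dots> = B (K a b *v x) (poly_op p Ric y)"
      by (simp add: poly_op_Ric_commute_K[symmetric] poly_op_Ric_symmetric)
    also have "\<dots> = B (K x (poly_op p Ric y) *v a) b"
      by (rule K_pair_symmetric)
    finally show "B (K (poly_op p Ric x) y *v a) b = B (K x (poly_op p Ric y) *v a) b" .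
  qed
  then show ?thesis by (simp add: matrix_eq)
qed

text \<open>Put \<open>S = p(Ric)\<close> on one of \<open>x, y, w\<close> in the Bianchi identity, or apply \<open>S\<close> to it. By
  \<open>K_poly_op_Ric_swap\<close>, the first three identities minus the fourth say \<open>2 (a + b + c) = 0\<close>.\<close>
lemma K_poly_op_Ric: "K (poly_op p Ric x) y *v w = poly_op p Ric (K x y *v w)"
proof -
  define S where "S = poly_op p Ric"
  have lin_S: "linear S" unfolding S_def by (rule linear_poly_op[OF Ric_linear])
  have swap: "K (S a) b = K a (S b)" for a b unfolding S_def by (rule K_poly_op_Ric_swap)
  have comm: "S (K a b *v c) = K a b *v S c" for a b c unfolding S_def by (rule poly_op_Ric_commute_K)
  define a b c where "a = K (S x) y *v w" and "b = K (S y) w *v x" and "c = K (S w) x *v y"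
  define a' b' c' where "a' = K x y *v S w" and "b' = K y w *v S x" and "c' = K w x *v S y"
  have 1: "a' + b + c = 0" using bianchi[of x y "S w"] by (simp add: a'_def b_def c_def swap)
  have 2: "a + b' + c = 0" using bianchi[of "S x" y w] by (simp add: a_def b'_def c_def swap)
  have 3: "a + b + c' = 0" using bianchi[of x "S y" w] by (simp add: a_def b_def c'_def swap)
  have 4: "a' + b' + c' = 0"
    using arg_cong[OF bianchi[of x y w], of S] lin_S
    by (simp add: a'_def b'_def c'_def linear_add linear_0 comm)
  have "2 *\<^sub>R (a + b + c) = (a' + b + c) + (a + b' + c) + (a + b + c') - (a' + b' + c')"
    by (simp add: algebra_simps scaleR_2)
  then have "a + b + c = a' + b + c" using 1 2 3 4 by simp
  then have "a = a'" by simp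
  then show ?thesis by (simp add: a_def a'_def S_def poly_op_Ric_commute_K)
qed

text \<open>\<open>B (Ric (q(Ric) x)) y\<close> is the trace of \<open>a \<mapsto> q(Ric) (K x a y)\<close>, a composition of two
  commuting maps, the first of them nilpotent.\<close>
lemma Ric_poly_op_Ric_eq_0_if_nilpotent:
  assumes "\<And>z. poly_op (q ^ k) Ric z = 0"
  shows "Ric (poly_op q Ric x) = 0"
proof (rule B_nondegenerate)
  fix y
  define M where "M a = K x a *v y" for a
  have "linear (poly_op q Ric \<circ> M)"
    unfolding M_def by (intro linear_compose[OF linear_K_apply_right linear_poly_op[OF Ric_linear]])
  moreover have "((poly_op q Ric \<circ> M) ^^ k) z = 0" for z
  proof -
    have "M (poly_op q Ric a) = poly_op q Ric (M a)" for a
      unfolding M_def by (simp flip: K_poly_op_Ric_swap add: K_poly_op_Ric)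
    then have "((poly_op q Ric \<circ> M) ^^ k) z = (poly_op q Ric ^^ k) ((M ^^ k) z)"
      by (rule funpow_comp_commute)
    then show ?thesis using assms by (simp add: poly_op_power[OF Ric_linear])
  qed
  ultimately have "trace_op (poly_op q Ric \<circ> M) = 0" by (rule trace_op_nilpotent)
  moreover have "B (Ric (poly_op q Ric x)) y = trace_op (poly_op q Ric \<circ> M)"
    by (simp add: B_Ric M_def K_poly_op_Ric o_def)
  ultimately show "B (Ric (poly_op q Ric x)) y = 0" by simp
qed

lemma min_poly_Ric_dvd_X_mult_radical:
  "min_poly Ric dvd [:0, 1:] * \<Prod>(prime_factors (min_poly Ric))"
proof -
  let ?m = "min_poly Ric"
  let ?r = "\<Prod>(prime_factors ?m)" and ?k = "\<Sum>p\<in>prime_factors ?m. multiplicity p ?m"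
  have "?m \<noteq> 0" using min_poly_monic[OF Ric_linear] by auto
  have "(\<Prod>p\<in>prime_factors ?m. p ^ multiplicity p ?m) dvd (\<Prod>p\<in>prime_factors ?m. p ^ ?k)"
    by (intro prod_dvd_prod le_imp_power_dvd member_le_sum) auto
  then have "?m dvd ?r ^ ?k"
    using prod_prime_factors[OF \<open>?m \<noteq> 0\<close>] min_poly_monic[OF Ric_linear]
    by (simp add: normalize_monic_poly prod_power_distrib)
  then have "poly_op (?r ^ ?k) Ric z = 0" for z
    using min_poly_annihilates[OF Ric_linear] poly_op_eq_0_dvd[OF Ric_linear] by blast
  then have "Ric (poly_op ?r Ric x) = 0" for x by (rule Ric_poly_op_Ric_eq_0_if_nilpotent)
  then have "poly_op ([:0, 1:] * ?r) Ric x = 0" for x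
    by (simp only: poly_op_mult[OF Ric_linear] poly_op_X[OF Ric_linear])
  then show ?thesis by (rule min_poly_dvd[OF Ric_linear])
qed

lemma kernel_decomposition:
  fixes g :: "'i \<Rightarrow> real poly"
  assumes fin: "finite I" and cop: "\<forall>i\<in>I. \<forall>j\<in>I. i \<noteq> j \<longrightarrow> coprime (g i) (g j)"
    and dvd: "min_poly Ric dvd (\<Prod>i\<in>I. g i)"
  shows "orthogonal_invariant_decomposition I (\<lambda>i. {x. poly_op (g i) Ric x = 0})"
proof -
  have "poly_op (\<Prod>i\<in>I. g i) Ric x = 0" for x
    using min_poly_annihilates[OF Ric_linear] dvd poly_op_eq_0_dvd[OF Ric_linear] by blast
  moreover have "B x y = 0"
    if "i \<in> I" "j \<in> I" "i \<noteq> j" "poly_op (g i) Ric x = 0" "poly_op (g j) Ric y = 0" for i j x y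
    using that cop by (intro kernels_coprime_orthogonal[of "g i" "g j"]) auto
  ultimately show ?thesis
    unfolding orthogonal_invariant_decomposition_def mem_Collect_eq
    using poly_op_kernels_sum_exists[OF Ric_linear fin cop]
      poly_op_kernels_sum_unique[OF Ric_linear fin cop] cop fin
    by (auto simp: poly_op_Ric_commute_K)
qed

lemma ricci_decomposition:
  "orthogonal_invariant_decomposition (insert None (Some ` (prime_factors (min_poly Ric) - {[:0, 1:]})))
     (\<lambda>i. case i of None \<Rightarrow> {x. Ric (Ric x) = 0} | Some P \<Rightarrow> {x. poly_op P Ric x = 0})"
proof -
  let ?X = "[:0, 1 :: real:]"
  let ?Fs = "prime_factors (min_poly Ric) - {?X}"
  define g :: "real poly option \<Rightarrow> real poly"
    where "g i = (case i of None \<Rightarrow> [:0, 0, 1:] | Some P \<Rightarrow> P)" for i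
  have E: "(\<lambda>i. case i of None \<Rightarrow> {x. Ric (Ric x) = 0} | Some P \<Rightarrow> {x. poly_op P Ric x = 0})
      = (\<lambda>i. {x. poly_op (g i) Ric x = 0})"
    by (rule ext) (simp add: g_def poly_op_X_squared[OF Ric_linear] split: option.split)
  have cop: "coprime P Q" if "P \<in> insert ?X ?Fs" "Q \<in> insert ?X ?Fs" "P \<noteq> Q" for P Q
    using that prime_X by (intro primes_coprime) (auto simp: in_prime_factors_iff)
  have cop_X2: "coprime [:0, 0, 1:] P" if "P \<in> ?Fs" for P
    using cop[of ?X P] that by (auto simp flip: X_squared simp: coprime_power_left_iff)
  have "coprime (g i) (g j)"
    if "i \<in> insert None (Some ` ?Fs)" "j \<in> insert None (Some ` ?Fs)" "i \<noteq> j" for i j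
  proof (cases i)
    case None
    with that obtain Q where "j = Some Q" "Q \<in> ?Fs" by auto
    then show ?thesis using None cop_X2[of Q] by (simp add: g_def)
  next
    case (Some P)
    then have "P \<in> ?Fs" using that(1) by auto
    show ?thesis
    proof (cases j)
      case None
      then show ?thesis using Some cop_X2[OF \<open>P \<in> ?Fs\<close>] by (simp add: g_def coprime_commute)
    next
      case (Some Q)
      then show ?thesis using \<open>i = Some P\<close> that cop[of P Q] by (auto simp: g_def)
    qed
  qed
  moreover have "min_poly Ric dvd (\<Prod>i\<in>insert None (Some ` ?Fs). g i)"
  proof -
    have "min_poly Ric dvd ?X * \<Prod>(prime_factors (min_poly Ric))"
      by (rule min_poly_Ric_dvd_X_mult_radical)
    also have "\<dots> dvd ?X * \<Prod>(insert ?X ?Fs)"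
      by (intro mult_dvd_mono dvd_refl prod_dvd_prod_subset) auto
    also have "\<Prod>(insert ?X ?Fs) = ?X * \<Prod>?Fs" by (rule prod.insert) auto
    also have "?X * (?X * \<Prod>?Fs) = g None * (\<Prod>P\<in>?Fs. g (Some P))" by (simp add: g_def)
    also have "(\<Prod>P\<in>?Fs. g (Some P)) = (\<Prod>i\<in>Some ` ?Fs. g i)"
      by (simp add: prod.reindex)
    also have "g None * \<dots> = (\<Prod>i\<in>insert None (Some ` ?Fs). g i)"
      by (rule prod.insert[symmetric]) auto
    finally show ?thesis .
  qed
  ultimately show ?thesis unfolding E by (intro kernel_decomposition) auto
qed

lemma ricci_decomposition_dim_ge_2:
  assumes "P \<in> prime_factors (min_poly Ric) - {[:0, 1:]}"
  shows "2 \<le> dim {x. poly_op P Ric x = 0}"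
proof -
  obtain e where "e \<noteq> 0" "poly_op P Ric e = 0"
    using min_poly_prime_factor_kernel_nonzero[OF Ric_linear, of P] assms by blast
  then have "2 \<le> dim (case Some P of None \<Rightarrow> {x. Ric (Ric x) = 0} | Some P \<Rightarrow> {x. poly_op P Ric x = 0})"
    using assms prime_factor_irreducible_coprime_X[OF assms]
    by (intro decomposition_kernel_dim_ge_2[OF ricci_decomposition, of _ P e]) auto
  then show ?thesis by simp
qed

lemma decomposition_lie_subalgebras:
  assumes "orthogonal_invariant_decomposition I E"
  shows "\<forall>i\<in>I. lie_subalgebra (hol_alg K (E i))"
  using decomposition_invariant[OF assms] by (blast intro: lie_subalgebra_hol_alg[OF semi_symmetric])

end

theorem mainTheorem2:
  fixes B :: "real^'n \<Rightarrow> real^'n \<Rightarrow> real"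
    and K :: "real^'n \<Rightarrow> real^'n \<Rightarrow> real^'n^'n"
    and Ric :: "real^'n \<Rightarrow> real^'n"
  assumes "pseudo_euclidean B"
    and "curvature_tensor B K"
    and "semi_symmetric K"
    and "is_ricci B K Ric"
  shows "\<exists>F :: real poly set. finite F
     \<and> min_poly Ric = \<Prod>F
     \<and> (\<forall>P\<in>F. lead_coeff P = 1 \<and> (irreducible P \<or> P = [:0,0,1:]))
     \<and> (\<forall>P\<in>F. \<forall>Q\<in>F. P \<noteq> Q \<longrightarrow> coprime P Q)
     \<and> (let Fs = F - {[:0,1:], [:0,0,1:]};
            Idx = insert None (Some ` Fs);
            E = (\<lambda>i. case i of None \<Rightarrow> {x. Ric (Ric x) = 0}
                              | Some P \<Rightarrow> {x. poly_op P Ric x = 0})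
        in (\<forall>P\<in>Fs. irreducible P \<and> coprime P [:0,1:])
         \<and> (\<forall>i\<in>Idx. \<forall>j\<in>Idx. i \<noteq> j \<longrightarrow> (\<forall>x\<in>E i. \<forall>y\<in>E j. B x y = 0))
         \<and> (\<forall>v. \<exists>c. (\<forall>i\<in>Idx. c i \<in> E i) \<and> v = (\<Sum>i\<in>Idx. c i))
         \<and> (\<forall>c. (\<forall>i\<in>Idx. c i \<in> E i) \<and> (\<Sum>i\<in>Idx. c i) = 0 \<longrightarrow> (\<forall>i\<in>Idx. c i = 0))
         \<and> (\<forall>i\<in>Idx. \<forall>u v x. x \<in> E i \<longrightarrow> K u v *v x \<in> E i)
         \<and> (\<forall>i\<in>Idx. \<forall>j\<in>Idx. i \<noteq> j \<longrightarrow> (\<forall>u\<in>E i. \<forall>v\<in>E j. K u v = 0))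
         \<and> (\<forall>P\<in>Fs. dim (E (Some P)) \<ge> 2)
         \<and> hol_alg K UNIV = {(\<Sum>i\<in>Idx. c i) | c. \<forall>i\<in>Idx. c i \<in> hol_alg K (E i)}
         \<and> (\<forall>i\<in>Idx. lie_subalgebra (hol_alg K (E i))))"
proof -
  interpret semi_symmetric_space B K Ric using assms by unfold_locales
  let ?m = "min_poly Ric"
  have m: "?m \<noteq> 0" "?m dvd [:0, 1:] * \<Prod>(prime_factors ?m)"
    using min_poly_monic[OF Ric_linear] min_poly_Ric_dvd_X_mult_radical by auto
  note D = ricci_decomposition
  show ?thesis
    using min_poly_eq_prod_prime_power_factors[OF Ric_linear] prime_power_factors_monic[OF m]
      prime_power_factors_coprime[of _ ?m] prime_factor_irreducible_coprime_X[of _ ?m]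
      ricci_decomposition_dim_ge_2
    by (intro exI[of _ "prime_power_factors ?m"], unfold Let_def prime_power_factors_minus_X_powers[OF m])
      (intro conjI ballI impI finite_prime_power_factors hol_alg_decomposition[OF D]
        decomposition_split[OF D] decomposition_unique[OF D] decomposition_orthogonal[OF D]
        decomposition_invariant[OF D] decomposition_K_cross_eq_0[OF D]
        decomposition_lie_subalgebras[OF D]; simp)
qed

end
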